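(* Let $\alpha>0$, $\gamma\in(0,1)$ and suppose $2k\le\gamma n$. Suppose the data $x_1,\dots,x_n$ have histogram $\theta=(\theta_1,\dots,\theta_r,0,\dots,0)\in\Theta$ for some $1\le r<k$ (all coordinates after the $r$-th equal zero). Let $z=(z_1,\dots,z_k)$ be given by $z_j=\theta_j$ if $\theta_j=0$, and $z_j=\theta_j+\frac{2}{n\alpha}L_j$ otherwise, where $L_1,\dots,L_k$ are i.i.d. Laplace random variables with mean zero and rate one, and let $\delta(z)\in\arg\min_{\theta'\in\Theta}\|z-\theta'\|_1$. Then $\|\theta-\delta(z)\|_1=O_P\!\left(\frac{r}{\alpha n}\right)$; that is, for every $\varepsilon>0$ there is $M<\infty$ depending only on $\varepsilon$ such that $\mathbb P\big(\|\theta-\delta(z)\|_1> M\,\frac{r}{\alpha n}\big)\le\varepsilon$.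
   Context: The sample space is partitioned into $k$ cells $B_1,\dots,B_k$; the histogram of $x_1,\dots,x_n$ is $\theta_j=\frac1n\sum_{i=1}^n\mathbf 1\{x_i\in B_j\}$, and $\Theta=\{(a_1/n,\dots,a_k/n):a_j\in\mathbb Z_{\ge0},\ \sum_ja_j=n\}$ is the set of all such histograms. $\|v\|_1=\sum_j|v_j|$. The Laplace distribution with mean zero and rate one has density $\frac12e^{-|x|}$. The probability is over the Laplace noise. *)

theory Defs
  imports "HOL-Probability.Probability"
begin

definition laplace :: "real measure" where
  "laplace = density lborel (\<lambda>x. ennreal (exp (- \<bar>x\<bar>) / 2))"

text \<open>Joint law of k i.i.d. Laplace variables L_0, ..., L_(k-1) (0-indexed cells).\<close>
definition laplace_noise :: "nat \<Rightarrow> (nat \<Rightarrow> real) measure" where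
  "laplace_noise k = PiM {..<k} (\<lambda>_. laplace)"

definition Hist :: "nat \<Rightarrow> nat \<Rightarrow> (nat \<Rightarrow> real) set" where
  "Hist n k = {\<theta>. \<exists>a::nat \<Rightarrow> nat. (\<Sum>j<k. a j) = n \<and>
       (\<forall>j. \<theta> j = (if j < k then real (a j) / real n else 0))}"

definition l1 :: "nat \<Rightarrow> (nat \<Rightarrow> real) \<Rightarrow> real" where
  "l1 k v = (\<Sum>j<k. \<bar>v j\<bar>)"

definition privatize :: "nat \<Rightarrow> nat \<Rightarrow> real \<Rightarrow> (nat \<Rightarrow> real) \<Rightarrow> (nat \<Rightarrow> real) \<Rightarrow> (nat \<Rightarrow> real)" where
  "privatize n k \<alpha> \<theta> L = (\<lambda>j. if j < k then
       (if \<theta> j = 0 then \<theta> j else \<theta> j + 2 / (real n * \<alpha>) * L j) else 0)"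

end

theory Submission
  imports Defs
begin

text \<open>
  Since \<delta>(z) is an l1-nearest histogram to z and \<theta> is itself a histogram, the triangle
  inequality gives l1(\<theta> - \<delta>(z)) \<le> 2 l1(z - \<theta>). The vector z - \<theta> vanishes outside the first
  r cells, where it is 2/(n\<alpha>) L_j, so l1(\<theta> - \<delta>(z)) \<le> 4/(n\<alpha>) (|L_0| + ... + |L_(r-1)|).
  The right-hand side has mean 4r/(n\<alpha>) because E|L_j| = 1, and Markov's inequality with
  M = 4/\<epsilon> concludes.
\<close>

lemma nn_integral_lborel_reflect:
  fixes f :: "real \<Rightarrow> ennreal"
  assumes [measurable]: "f \<in> borel_measurable borel"
  shows "(\<integral>\<^sup>+x. f (- x) \<partial>lborel) = (\<integral>\<^sup>+x. f x \<partial>lborel)"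
proof -
  have "(\<integral>\<^sup>+x. f (- x) \<partial>lborel) = (\<integral>\<^sup>+x. f x \<partial>distr lborel borel uminus)"
    by (subst nn_integral_distr) auto
  then show ?thesis
    by (simp add: lborel_distr_uminus)
qed

text \<open>The absolute value of a Laplace variable is exponential, i.e. Erlang of order 0 and rate 1.\<close>
lemma nn_integral_laplace_density_abs_power:
  "(\<integral>\<^sup>+x. ennreal (exp (- \<bar>x\<bar>) / 2 * \<bar>x\<bar> ^ i) \<partial>lborel) = ennreal (fact i)"
proof -
  define e where "e x = ennreal (erlang_density 0 1 x * x ^ i / 2)" for x
  have e_measurable [measurable]: "e \<in> borel_measurable borel"
    unfolding e_def erlang_density_def by measurable
  have "(\<integral>\<^sup>+x. ennreal (exp (- \<bar>x\<bar>) / 2 * \<bar>x\<bar> ^ i) \<partial>lborel)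
      = (\<integral>\<^sup>+x. e x + e (- x) \<partial>lborel)"
  proof (intro nn_integral_cong_AE eventually_mono[OF AE_lborel_singleton[of 0]])
    fix x :: real
    assume "x \<noteq> 0"
    then show "ennreal (exp (- \<bar>x\<bar>) / 2 * \<bar>x\<bar> ^ i) = e x + e (- x)"
      by (cases "x < 0")
        (auto simp: e_def erlang_density_def power_minus_odd simp flip: ennreal_plus)
  qed
  also have "\<dots> = (\<integral>\<^sup>+x. e x \<partial>lborel) + (\<integral>\<^sup>+x. e (- x) \<partial>lborel)"
    by (rule nn_integral_add) auto
  also have "(\<integral>\<^sup>+x. e (- x) \<partial>lborel) = (\<integral>\<^sup>+x. e x \<partial>lborel)"
    by (rule nn_integral_lborel_reflect) simp
  also have "(\<integral>\<^sup>+x. e x \<partial>lborel)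
      = (\<integral>\<^sup>+x. ennreal (erlang_density 0 1 x * x ^ i) * ennreal (1/2) \<partial>lborel)"
    unfolding e_def
    by (intro nn_integral_cong, subst ennreal_mult[symmetric]) (auto simp: erlang_density_def)
  also have "\<dots> = ennreal (fact i) * ennreal (1/2)"
    by (simp add: nn_integral_multc nn_integral_erlang_ith_moment)
  also have "\<dots> = ennreal (fact i / 2)"
    by (subst ennreal_mult[symmetric]) auto
  finally show ?thesis
    by (simp flip: ennreal_plus)
qed

lemma prob_space_laplace: "prob_space laplace"
proof
  have "emeasure laplace (space laplace)
      = (\<integral>\<^sup>+x. ennreal (exp (- \<bar>x\<bar>) / 2 * \<bar>x\<bar> ^ 0) \<partial>lborel)"
    unfolding laplace_def by (subst emeasure_density) auto
  then show "emeasure laplace (space laplace) = 1"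
    by (simp only: nn_integral_laplace_density_abs_power) simp
qed

lemma nn_integral_laplace_abs: "(\<integral>\<^sup>+x. ennreal \<bar>x\<bar> \<partial>laplace) = 1"
proof -
  have "(\<integral>\<^sup>+x. ennreal \<bar>x\<bar> \<partial>laplace)
      = (\<integral>\<^sup>+x. ennreal (exp (- \<bar>x\<bar>) / 2 * \<bar>x\<bar> ^ 1) \<partial>lborel)"
    unfolding laplace_def
    by (subst nn_integral_density) (auto intro!: nn_integral_cong simp flip: ennreal_mult)
  then show ?thesis
    by (simp only: nn_integral_laplace_density_abs_power) simp
qed

lemma prob_space_laplace_noise: "prob_space (laplace_noise k)"
  unfolding laplace_noise_def by (intro prob_space_PiM prob_space_laplace)

lemma measurable_laplace_noise_component:
  assumes "j < k"
  shows "(\<lambda>L. L j) \<in> borel_measurable (laplace_noise k)"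
proof -
  have "(\<lambda>L. L j) \<in> laplace_noise k \<rightarrow>\<^sub>M laplace"
    unfolding laplace_noise_def using assms by (intro measurable_component_singleton) auto
  then show ?thesis
    by (simp add: laplace_def)
qed

lemma borel_measurable_laplace_noise_sum_abs:
  assumes "r \<le> k"
  shows "(\<lambda>L. \<Sum>j<r. \<bar>L j\<bar>) \<in> borel_measurable (laplace_noise k)"
  using assms by (intro borel_measurable_sum borel_measurable_abs
      measurable_laplace_noise_component) auto

lemma nn_integral_laplace_noise_abs_component:
  assumes "j < k"
  shows "(\<integral>\<^sup>+L. ennreal \<bar>L j\<bar> \<partial>laplace_noise k) = 1"
proof -
  have "distr (laplace_noise k) laplace (\<lambda>L. L j) = laplace"
    unfolding laplace_noise_def using assms prob_space_laplace
    by (intro distr_PiM_component) auto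
  moreover have "(\<integral>\<^sup>+L. ennreal \<bar>L j\<bar> \<partial>laplace_noise k)
      = (\<integral>\<^sup>+x. ennreal \<bar>x\<bar> \<partial>distr (laplace_noise k) laplace (\<lambda>L. L j))"
    unfolding laplace_noise_def using assms
    by (subst nn_integral_distr) (auto simp: laplace_def)
  ultimately show ?thesis
    by (simp add: nn_integral_laplace_abs)
qed

lemma nn_integral_laplace_noise_sum_abs:
  assumes "r \<le> k"
  shows "(\<integral>\<^sup>+L. ennreal (\<Sum>j<r. \<bar>L j\<bar>) \<partial>laplace_noise k) = r"
proof -
  have "(\<integral>\<^sup>+L. ennreal (\<Sum>j<r. \<bar>L j\<bar>) \<partial>laplace_noise k)
      = (\<Sum>j<r. \<integral>\<^sup>+L. ennreal \<bar>L j\<bar> \<partial>laplace_noise k)"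
    using assms measurable_laplace_noise_component
    by (subst nn_integral_sum[symmetric]) (auto simp: sum_ennreal)
  also have "\<dots> = (\<Sum>j<r. 1)"
    using assms by (intro sum.cong refl nn_integral_laplace_noise_abs_component) auto
  finally show ?thesis
    by simp
qed

lemma measure_laplace_noise_sum_abs_ge:
  assumes "r \<le> k" "c > 0"
  shows "measure (laplace_noise k) {L \<in> space (laplace_noise k). c \<le> (\<Sum>j<r. \<bar>L j\<bar>)} \<le> r / c"
proof -
  let ?N = "laplace_noise k" and ?S = "\<lambda>L. \<Sum>j<r. \<bar>L j\<bar>"
  interpret prob_space ?N
    by (rule prob_space_laplace_noise)
  have [measurable]: "?S \<in> borel_measurable ?N"
    using assms(1) by (rule borel_measurable_laplace_noise_sum_abs)
  have "{L \<in> space ?N. c \<le> ?S L} = {L \<in> space ?N. 1 \<le> ennreal (1 / c) * ennreal (?S L)}"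
    using assms(2) by (auto simp: divide_simps simp flip: ennreal_mult)
  also have "emeasure ?N \<dots> \<le> ennreal (1 / c) * (\<integral>\<^sup>+L. ennreal (?S L) * indicator (space ?N) L \<partial>?N)"
    by (intro nn_integral_Markov_inequality) auto
  also have "(\<integral>\<^sup>+L. ennreal (?S L) * indicator (space ?N) L \<partial>?N) = r"
    using assms(1) by (simp add: nn_integral_laplace_noise_sum_abs cong: nn_integral_cong)
  finally show ?thesis
    using assms(2) by (simp add: emeasure_eq_measure ennreal_of_nat_eq_real_of_nat flip: ennreal_mult)
qed

lemma l1_triangle: "l1 k (u - w) \<le> l1 k (u - v) + l1 k (v - w)"
  unfolding l1_def sum.distrib[symmetric] by (intro sum_mono) (simp add: abs_triangle_ineq4)

lemma l1_commute: "l1 k (u - v) = l1 k (v - u)"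
  unfolding l1_def by (simp add: abs_minus_commute)

lemma l1_projection_dist_le:
  assumes "l1 k (z - d) \<le> l1 k (z - \<theta>)"
  shows "l1 k (\<theta> - d) \<le> 2 * l1 k (z - \<theta>)"
  using l1_triangle[of k \<theta> d z] l1_commute[of k \<theta> z] assms by linarith

lemma l1_privatize_minus_le:
  assumes "r \<le> k" "\<forall>j. r \<le> j \<longrightarrow> \<theta> j = 0" "0 \<le> \<alpha>"
  shows "l1 k (privatize n k \<alpha> \<theta> L - \<theta>) \<le> 2 / (real n * \<alpha>) * (\<Sum>j<r. \<bar>L j\<bar>)"
proof -
  have "l1 k (privatize n k \<alpha> \<theta> L - \<theta>)
      \<le> (\<Sum>j<k. if j < r then 2 / (real n * \<alpha>) * \<bar>L j\<bar> else 0)"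
    unfolding l1_def using assms(2,3) by (intro sum_mono) (auto simp: privatize_def abs_mult)
  also have "\<dots> = (\<Sum>j<r. 2 / (real n * \<alpha>) * \<bar>L j\<bar>)"
  proof -
    have "{..<k} \<inter> {j. j < r} = {..<r}"
      using assms(1) by auto
    then show ?thesis
      by (simp add: sum.If_cases)
  qed
  finally show ?thesis
    by (simp add: sum_distrib_left)
qed

lemma l1_dist_privatize_nearest_histogram_le:
  assumes "r \<le> k" "\<forall>j. r \<le> j \<longrightarrow> \<theta> j = 0" "0 \<le> \<alpha>" "\<theta> \<in> H"
    and "\<forall>\<theta>'\<in>H. l1 k (privatize n k \<alpha> \<theta> L - d) \<le> l1 k (privatize n k \<alpha> \<theta> L - \<theta>')"
  shows "l1 k (\<theta> - d) \<le> 4 / (real n * \<alpha>) * (\<Sum>j<r. \<bar>L j\<bar>)"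
  using l1_projection_dist_le[of k "privatize n k \<alpha> \<theta> L" d \<theta>]
    l1_privatize_minus_le[OF assms(1-3), of n L] assms(4,5)
  by auto

lemma measure_privatize_nearest_histogram_dist_gt:
  assumes "\<epsilon> > 0" "\<alpha> > 0" "n > 0" "1 \<le> r" "r \<le> k" "\<theta> \<in> Hist n k"
    and "\<forall>j. r \<le> j \<longrightarrow> \<theta> j = 0"
    and "\<forall>w. \<delta> w \<in> Hist n k \<and> (\<forall>\<theta>'\<in>Hist n k. l1 k (w - \<delta> w) \<le> l1 k (w - \<theta>'))"
  shows "measure (laplace_noise k)
           {L \<in> space (laplace_noise k).
              l1 k (\<theta> - \<delta> (privatize n k \<alpha> \<theta> L)) > 4 / \<epsilon> * real r / (\<alpha> * real n)} \<le> \<epsilon>"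
    (is "measure ?N ?B \<le> _")
proof -
  interpret prob_space ?N
    by (rule prob_space_laplace_noise)
  define T where "T = {L \<in> space ?N. r / \<epsilon> \<le> (\<Sum>j<r. \<bar>L j\<bar>)}"
  have [measurable]: "(\<lambda>L. \<Sum>j<r. \<bar>L j\<bar>) \<in> borel_measurable ?N"
    using assms(5) by (rule borel_measurable_laplace_noise_sum_abs)
  have "?B \<subseteq> T"
  proof
    fix L
    assume L: "L \<in> ?B"
    have "l1 k (\<theta> - \<delta> (privatize n k \<alpha> \<theta> L)) \<le> 4 / (real n * \<alpha>) * (\<Sum>j<r. \<bar>L j\<bar>)"
      using assms by (intro l1_dist_privatize_nearest_histogram_le[where H = "Hist n k"]) auto
    with L have "4 / \<epsilon> * real r / (\<alpha> * real n) < 4 / (real n * \<alpha>) * (\<Sum>j<r. \<bar>L j\<bar>)"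
      by simp
    then show "L \<in> T"
      using L assms(1-3) by (simp add: T_def field_simps)
  qed
  moreover have "T \<in> sets ?N"
    unfolding T_def by measurable
  ultimately have "measure ?N ?B \<le> measure ?N T"
    by (cases "?B \<in> sets ?N") (auto intro: finite_measure_mono simp: measure_notin_sets)
  also have "\<dots> \<le> r / (r / \<epsilon>)"
    unfolding T_def using assms(1,4,5) by (intro measure_laplace_noise_sum_abs_ge) auto
  finally show ?thesis
    using assms(4) by simp
qed

theorem theorem5p1:
  shows "\<forall>\<epsilon>>0. \<exists>M::real. \<forall>(n::nat) (k::nat) (r::nat) (\<alpha>::real) (\<gamma>::real)
           (\<theta>::nat \<Rightarrow> real) (\<delta>::(nat \<Rightarrow> real) \<Rightarrow> (nat \<Rightarrow> real)).
     \<alpha> > 0 \<longrightarrow> 0 < \<gamma> \<longrightarrow> \<gamma> < 1 \<longrightarrow> 2 * real k \<le> \<gamma> * real n \<longrightarrow>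
     1 \<le> r \<longrightarrow> r < k \<longrightarrow> \<theta> \<in> Hist n k \<longrightarrow> (\<forall>j. r \<le> j \<longrightarrow> \<theta> j = 0) \<longrightarrow>
     (\<forall>w. \<delta> w \<in> Hist n k \<and> (\<forall>\<theta>'\<in>Hist n k. l1 k (w - \<delta> w) \<le> l1 k (w - \<theta>'))) \<longrightarrow>
     (\<lambda>L. \<delta> (privatize n k \<alpha> \<theta> L)) \<in> laplace_noise k \<rightarrow>\<^sub>M count_space UNIV \<longrightarrow>
     measure (laplace_noise k)
       {L \<in> space (laplace_noise k).
          l1 k (\<theta> - \<delta> (privatize n k \<alpha> \<theta> L)) > M * real r / (\<alpha> * real n)} \<le> \<epsilon>"
  \<comment> \<open>The constraint 2k \<le> \<gamma>n only serves to force n > 0.\<close>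
  apply (intro allI impI)
  subgoal for \<epsilon>
    by (intro exI[of _ "4 / \<epsilon>"] allI impI measure_privatize_nearest_histogram_dist_gt)
      (auto intro: gr0I)
  done

end
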